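(* Let $n$ be a positive even integer and $a=\sqrt[n]{n+1}$. Let $\eta:(-a,a)\to(-a,a)$ be the involution defined by $\eta(0)=0$ and, for $u\neq0$, $\eta(u)$ is the unique point with $u\,\eta(u)<0$ and $W(\eta(u))=W(u)$. Define $$T_n(u)=(n+1)\frac{\int_{\eta(u)}^{u}t^n\,dt}{\int_{\eta(u)}^{u}dt}=\sum_{k=0}^{n}u^{n-k}\eta(u)^k .$$ Then $T_n'(u)>0$ for all $u\in(0,a)$.
   Context: $W(u)=\frac{u^2}{2}-\frac{u^{n+2}}{(n+1)(n+2)}$; $W$ is strictly decreasing on $(-a,0)$ and strictly increasing on $(0,a)$, with $W(-a)=W(a)=d_n=\frac{n(n+1)^{2/n}}{2(n+2)}$, so $\eta$ is well defined. *)

theory Defs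
  imports "HOL-Analysis.Analysis"
begin

definition W :: "nat \<Rightarrow> real \<Rightarrow> real" where
  "W n u = u^2 / 2 - u^(n+2) / ((real n + 1) * (real n + 2))"

definition aa :: "nat \<Rightarrow> real" where
  "aa n = root n (real n + 1)"

definition eta :: "nat \<Rightarrow> real \<Rightarrow> real" where
  "eta n u = (if u = 0 then 0 else
     (THE v. v \<in> {- aa n<..<aa n} \<and> u * v < 0 \<and> W n v = W n u))"

definition T :: "nat \<Rightarrow> real \<Rightarrow> real" where
  "T n u = (\<Sum>k\<le>n. u^(n-k) * (eta n u)^k)"

end

theory Submission
  imports Defs
begin

text \<open>For even \<open>n\<close> the potential \<open>W\<close> is an even function that is strictly increasing on
  \<open>[0, a)\<close>, so the involution \<open>\<eta>\<close> is simply \<open>u \<mapsto> -u\<close>. Then \<open>T\<^sub>n(u)\<close> is an alternating sum of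
  \<open>n + 1\<close> copies of \<open>u\<^sup>n\<close>, i.e. \<open>T\<^sub>n(u) = u\<^sup>n\<close> on \<open>(-a, a)\<close>, whose derivative \<open>n u^(n-1)\<close> is positive for
  \<open>u > 0\<close>.\<close>

lemma W_minus: "even n \<Longrightarrow> W n (- x) = W n x"
  by (simp add: W_def)

lemma aa_power: "n > 0 \<Longrightarrow> aa n ^ n = real n + 1"
  unfolding aa_def by (simp add: real_root_pow_pos2)

lemma has_real_derivative_W: "(W n has_real_derivative (x - x ^ (n + 1) / (real n + 1))) (at x)"
proof -
  have "(W n has_real_derivative
      real 2 * x ^ (2 - Suc 0) / 2 - real (n + 2) * x ^ (n + 2 - Suc 0) / ((real n + 1) * (real n + 2))) (at x)"
    unfolding W_def by (rule DERIV_diff; rule DERIV_cdivide; rule DERIV_pow)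
  moreover have "real (n + 2) * x ^ (n + 2 - Suc 0) / ((real n + 1) * (real n + 2)) = x ^ (n + 1) / (real n + 1)"
    by (simp add: add.commute)
  ultimately show ?thesis by simp
qed

lemma W_strict_mono_on: "n > 0 \<Longrightarrow> strict_mono_on {0..<aa n} (W n)"
proof (rule strict_mono_onI)
  fix x y assume n: "n > 0" and x: "x \<in> {0..<aa n}" and y: "y \<in> {0..<aa n}" and "x < y"
  show "W n x < W n y"
  proof (rule DERIV_pos_imp_increasing_open[OF \<open>x < y\<close>])
    fix t assume t: "x < t" "t < y"
    have "t ^ n < real n + 1"
      using power_strict_mono[of t "aa n" n] aa_power[OF n] t x y n by auto
    then have "t * t ^ n < t * (real n + 1)"
      using t x by (intro mult_strict_left_mono) auto
    then have "t ^ (n + 1) / (real n + 1) < t"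
      by (simp add: field_simps)
    then show "\<exists>d. (W n has_real_derivative d) (at t) \<and> 0 < d"
      using has_real_derivative_W diff_gt_0_iff_gt by blast
  next
    show "continuous_on {x..y} (W n)"
      unfolding W_def by (intro continuous_intros) auto
  qed
qed

lemma eta_eq_uminus:
  assumes "n > 0" "even n" "\<bar>u\<bar> < aa n"
  shows "eta n u = - u"
proof (cases "u = 0")
  case False
  have inj: "inj_on (W n) {0..<aa n}"
    using W_strict_mono_on[OF assms(1)] strict_mono_on_imp_inj_on by blast
  have "(THE v. v \<in> {- aa n<..<aa n} \<and> u * v < 0 \<and> W n v = W n u) = - u"
  proof (rule the_equality)
    show "- u \<in> {- aa n<..<aa n} \<and> u * - u < 0 \<and> W n (- u) = W n u"
      using assms False W_minus[OF assms(2)] by (auto simp: zero_less_mult_iff)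
  next
    fix v assume v: "v \<in> {- aa n<..<aa n} \<and> u * v < 0 \<and> W n v = W n u"
    then have "W n \<bar>v\<bar> = W n \<bar>u\<bar>"
      using W_minus[OF assms(2)] by (simp add: abs_if)
    moreover have "\<bar>v\<bar> \<in> {0..<aa n}" "\<bar>u\<bar> \<in> {0..<aa n}"
      using v assms(3) by auto
    ultimately have "\<bar>v\<bar> = \<bar>u\<bar>"
      using inj by (auto dest: inj_onD)
    then show "v = - u"
      using v by (auto simp: abs_if mult_less_0_iff split: if_splits)
  qed
  then show ?thesis
    using False unfolding eta_def by simp
qed (simp add: eta_def)

lemma sum_power_mult_minus_power_even:
  fixes x :: "'a :: comm_ring_1"
  assumes "even n"
  shows "(\<Sum>k\<le>n. x ^ (n - k) * (- x) ^ k) = x ^ n"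
proof -
  have "x ^ (n - k) * (- x) ^ k = x ^ n * (- 1) ^ k" if "k \<le> n" for k
  proof -
    have "x ^ (n - k) * (- x) ^ k = (- 1) ^ k * (x ^ (n - k) * x ^ k)"
      by (subst power_minus) (simp add: mult_ac)
    also have "\<dots> = x ^ n * (- 1) ^ k"
      using that by (simp add: power_add [symmetric])
    finally show ?thesis .
  qed
  then have "(\<Sum>k\<le>n. x ^ (n - k) * (- x) ^ k) = x ^ n * (\<Sum>k\<le>n. (- 1) ^ k)"
    by (simp add: sum_distrib_left)
  moreover have "(\<Sum>k\<le>2 * m. (- 1 :: 'a) ^ k) = 1" for m
    by (induction m) (auto simp: numeral_2_eq_2)
  ultimately show ?thesis
    using assms by (auto elim: evenE)
qed

lemma T_eq_power:
  assumes "n > 0" "even n" "\<bar>u\<bar> < aa n"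
  shows "T n u = u ^ n"
  unfolding T_def eta_eq_uminus[OF assms] using sum_power_mult_minus_power_even[OF assms(2)] .

theorem mainTheorem6:
  fixes n :: nat and u :: real
  assumes "n > 0" and "even n" and "0 < u" and "u < aa n"
  shows "T n differentiable (at u) \<and> deriv (T n) u > 0"
proof -
  have "((\<lambda>x. x ^ n) has_real_derivative real n * u ^ (n - 1)) (at u)"
    by (auto intro!: derivative_eq_intros)
  then have "(T n has_real_derivative real n * u ^ (n - 1)) (at u)"
    by (rule has_field_derivative_transform_within_open[where S = "{- aa n<..<aa n}"])
       (use assms T_eq_power in auto)
  moreover have "real n * u ^ (n - 1) > 0"
    using assms by simp
  ultimately show ?thesis
    using DERIV_imp_deriv real_differentiable_def by fastforce
qed

end
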